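(* Let $G=\langle A\cup B\rangle$ be a stable and strongly orbitwise-abelian CS group with periodic rooted group $A$ such that either (i) $A$ has finite exponent, or (ii) the directed group $B$ has finite support. Assume that $B$ is abelian and periodic. If the atomic dynamical system $\Lambda_b$ on $\mathcal P(A)$ is eventually trivial for every $b\in B$, then $G$ is periodic.
   Context: Let $X$ be a nonempty set (possibly infinite) with distinguished letter $0$, $\dot X=X\setminus\{0\}$. $X^*$ is the free monoid on $X$ viewed as a rooted tree; $\mathrm{Aut}(X^* )$ is the group of root-fixing tree automorphisms acting on the right ($gh$ = first $g$ then $h$); sections $g|_u$ are defined by $(u\star v).g=u.g\star v.(g|_u)$; elements of $\mathrm{Sym}(X)$ are identified with rooted automorphisms $(x\star v).\rho=x.\rho\star v$; $\mathrm{St}(1)$ is the first layer stabiliser. A constant spinal (CS) group is $G=\langle A\cup B\rangle$ with $A\le\mathrm{Sym}(X)$ transitive (rooted group) and $B\le\mathrm{St}(1)$ (directed group) such that $b|_0=b$ for all $b\in B$ and the elements $b|_x$ ($b\in B$, $x\in\dot X$) lie in $A$ and generate $A$. $B$ has finite support if each $b\in B$ has $b|_x=\mathrm{id}$ for all but finitely many $x$. A group is periodic if every element has finite order. Notation: $\mathrm{st}_A(0)$ is the stabiliser of $0$; $\mathrm{orb}_c(0)$ the $\langle c\rangle$-orbit of $0$ and $\ell_c(0)$ its length. For $x\in X$ let $\mathrm{mp}_A(0,x)=\{c\in A: 0.c=x\}$ and fix $e_{0\mapsto x}\in\mathrm{mp}_A(0,x)$ with $e_{0\mapsto0}=1_A$.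 For $a\in A$, $x\in X$: $\mathfrak C(a,x)=\{cac^{-1}:c\in\mathrm{mp}_A(0,x)\}$ and $\mathfrak X(a,x)=\bigcup_{c\in\mathfrak C(a,x)}\mathrm{orb}_c(0)\setminus\{0\}$. For $b\in B$, $a\in A$ ($A$ periodic): $\lambda_b(a)=b|_{0.a}\,b|_{0.a^2}\cdots b|_{0.a^{\ell_a(0)-1}}$, $\lambda_b(a,x)=\lambda_b(e_{0\mapsto x}\,a\,e_{0\mapsto x}^{-1})$, and $\Lambda_b:\mathcal P(A)\to\mathcal P(A)$ is the atomic map $\Lambda_b(P)=\bigcup_{a\in P}\{\lambda_b(a,x):x\in X\}$. An atomic map $\Phi$ on $\mathcal P(A)$ is eventually trivial if for every $a\in A$ there is $n$ with $\Phi^m(\{a\})\subseteq\{1_A\}$ for all $m>n$. $G$ is stable if $\lambda_b(c')=\lambda_b(c'')$ for all $b\in B$, $a\in A$, $x\in X$ and $c',c''\in\mathfrak C(a,x)$. $G$ is strongly orbitwise-abelian if $\langle b|_y: y\in\mathfrak X(a,x),\ b\in B\rangle$ is abelian for all $a\in A$, $x\in X$. *)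

theory Defs
  imports Main
begin

text \<open>Automorphisms act on the right; we represent an automorphism g by the function
u \<mapsto> u.g. Hence the product gh ("first g then h") is the function h \<circ> g.\<close>

definition tree_aut :: "('x list \<Rightarrow> 'x list) \<Rightarrow> bool" where
  "tree_aut g \<longleftrightarrow> bij g \<and> (\<forall>u. length (g u) = length u)
     \<and> (\<forall>u v. take (length u) (g (u @ v)) = g u)"

definition sect :: "('x list \<Rightarrow> 'x list) \<Rightarrow> 'x list \<Rightarrow> ('x list \<Rightarrow> 'x list)" where
  "sect g u = (\<lambda>v. drop (length u) (g (u @ v)))"

definition rooted :: "('x \<Rightarrow> 'x) \<Rightarrow> ('x list \<Rightarrow> 'x list)" where
  "rooted \<rho> = (\<lambda>w. case w of [] \<Rightarrow> [] | x # v \<Rightarrow> \<rho> x # v)"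

definition perm_of :: "('x list \<Rightarrow> 'x list) \<Rightarrow> ('x \<Rightarrow> 'x)" where
  "perm_of g = (\<lambda>x. hd (g [x]))"

definition in_St1 :: "('x list \<Rightarrow> 'x list) \<Rightarrow> bool" where
  "in_St1 g \<longleftrightarrow> (\<forall>x. g [x] = [x])"

inductive_set gen_grp :: "('a \<Rightarrow> 'a) set \<Rightarrow> ('a \<Rightarrow> 'a) set" for S where
  gen_id: "id \<in> gen_grp S"
| gen_gen: "s \<in> S \<Longrightarrow> s \<in> gen_grp S"
| gen_inv: "s \<in> S \<Longrightarrow> inv s \<in> gen_grp S"
| gen_mult: "g \<in> gen_grp S \<Longrightarrow> h \<in> gen_grp S \<Longrightarrow> h \<circ> g \<in> gen_grp S"

definition perm_group :: "('a \<Rightarrow> 'a) set \<Rightarrow> bool" where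
  "perm_group S \<longleftrightarrow> (\<forall>f\<in>S. bij f) \<and> id \<in> S
     \<and> (\<forall>f\<in>S. \<forall>g\<in>S. g \<circ> f \<in> S) \<and> (\<forall>f\<in>S. inv f \<in> S)"

definition periodic :: "('a \<Rightarrow> 'a) set \<Rightarrow> bool" where
  "periodic S \<longleftrightarrow> (\<forall>g\<in>S. \<exists>n>0. g ^^ n = id)"

definition abelian :: "('a \<Rightarrow> 'a) set \<Rightarrow> bool" where
  "abelian S \<longleftrightarrow> (\<forall>f\<in>S. \<forall>g\<in>S. f \<circ> g = g \<circ> f)"

definition finite_exponent :: "('a \<Rightarrow> 'a) set \<Rightarrow> bool" where
  "finite_exponent S \<longleftrightarrow> (\<exists>n>0. \<forall>g\<in>S. g ^^ n = id)"

definition transitive_on :: "('x \<Rightarrow> 'x) set \<Rightarrow> bool" where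
  "transitive_on A \<longleftrightarrow> (\<forall>x y. \<exists>a\<in>A. a x = y)"

(* constant spinal group data: A rooted group, B directed group, x0 the letter 0 *)
definition CS_data :: "'x \<Rightarrow> ('x \<Rightarrow> 'x) set \<Rightarrow> ('x list \<Rightarrow> 'x list) set \<Rightarrow> bool" where
  "CS_data x0 A B \<longleftrightarrow>
     perm_group A \<and> transitive_on A \<and>
     perm_group B \<and> (\<forall>b\<in>B. tree_aut b \<and> in_St1 b) \<and>
     (\<forall>b\<in>B. sect b [x0] = b) \<and>
     (\<forall>b\<in>B. \<forall>x. x \<noteq> x0 \<longrightarrow> (\<exists>a\<in>A. sect b [x] = rooted a)) \<and>
     A = gen_grp {perm_of (sect b [x]) | b x. b \<in> B \<and> x \<noteq> x0}"

definition CS_group :: "('x \<Rightarrow> 'x) set \<Rightarrow> ('x list \<Rightarrow> 'x list) set \<Rightarrow> ('x list \<Rightarrow> 'x list) set" where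
  "CS_group A B = gen_grp (rooted ` A \<union> B)"

definition finite_support :: "'x \<Rightarrow> ('x list \<Rightarrow> 'x list) set \<Rightarrow> bool" where
  "finite_support x0 B \<longleftrightarrow> (\<forall>b\<in>B. finite {x. x \<noteq> x0 \<and> sect b [x] \<noteq> id})"

definition orb :: "('x \<Rightarrow> 'x) \<Rightarrow> 'x \<Rightarrow> 'x set" where
  "orb c x0 = {(c ^^ k) x0 | k. True}"

definition orb_len :: "('x \<Rightarrow> 'x) \<Rightarrow> 'x \<Rightarrow> nat" where
  "orb_len c x0 = (LEAST n. n > 0 \<and> (c ^^ n) x0 = x0)"

definition mp :: "('x \<Rightarrow> 'x) set \<Rightarrow> 'x \<Rightarrow> 'x \<Rightarrow> ('x \<Rightarrow> 'x) set" where
  "mp A x0 x = {c \<in> A. c x0 = x}"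

(* c a c^{-1} (first c, then a, then c^{-1}) as a function *)
definition conjg :: "('x \<Rightarrow> 'x) \<Rightarrow> ('x \<Rightarrow> 'x) \<Rightarrow> ('x \<Rightarrow> 'x)" where
  "conjg c a = inv c \<circ> a \<circ> c"

definition CC :: "('x \<Rightarrow> 'x) set \<Rightarrow> 'x \<Rightarrow> ('x \<Rightarrow> 'x) \<Rightarrow> 'x \<Rightarrow> ('x \<Rightarrow> 'x) set" where
  "CC A x0 a x = {conjg c a | c. c \<in> mp A x0 x}"

definition XX :: "('x \<Rightarrow> 'x) set \<Rightarrow> 'x \<Rightarrow> ('x \<Rightarrow> 'x) \<Rightarrow> 'x \<Rightarrow> 'x set" where
  "XX A x0 a x = (\<Union>c\<in>CC A x0 a x. orb c x0 - {x0})"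

(* product p1 p2 ... pm in right-action convention (first p1): function pm \<circ> ... \<circ> p1 *)
fun prod_right :: "('a \<Rightarrow> 'a) list \<Rightarrow> ('a \<Rightarrow> 'a)" where
  "prod_right [] = id"
| "prod_right (p # ps) = prod_right ps \<circ> p"

definition lam :: "'x \<Rightarrow> ('x list \<Rightarrow> 'x list) \<Rightarrow> ('x \<Rightarrow> 'x) \<Rightarrow> ('x \<Rightarrow> 'x)" where
  "lam x0 b a = prod_right (map (\<lambda>k. perm_of (sect b [(a ^^ k) x0])) [1..<orb_len a x0])"

definition lamx :: "'x \<Rightarrow> ('x \<Rightarrow> ('x \<Rightarrow> 'x)) \<Rightarrow> ('x list \<Rightarrow> 'x list) \<Rightarrow> ('x \<Rightarrow> 'x) \<Rightarrow> 'x \<Rightarrow> ('x \<Rightarrow> 'x)" where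
  "lamx x0 e b a x = lam x0 b (conjg (e x) a)"

definition Lam :: "'x \<Rightarrow> ('x \<Rightarrow> ('x \<Rightarrow> 'x)) \<Rightarrow> ('x list \<Rightarrow> 'x list) \<Rightarrow> ('x \<Rightarrow> 'x) set \<Rightarrow> ('x \<Rightarrow> 'x) set" where
  "Lam x0 e b P = (\<Union>a\<in>P. {lamx x0 e b a x | x. True})"

definition eventually_trivial :: "('x \<Rightarrow> 'x) set \<Rightarrow> (('x \<Rightarrow> 'x) set \<Rightarrow> ('x \<Rightarrow> 'x) set) \<Rightarrow> bool" where
  "eventually_trivial A \<Phi> \<longleftrightarrow> (\<forall>a\<in>A. \<exists>n. \<forall>m>n. (\<Phi> ^^ m) {a} \<subseteq> {id})"

definition stable :: "'x \<Rightarrow> ('x \<Rightarrow> 'x) set \<Rightarrow> ('x list \<Rightarrow> 'x list) set \<Rightarrow> bool" where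
  "stable x0 A B \<longleftrightarrow> (\<forall>b\<in>B. \<forall>a\<in>A. \<forall>x. \<forall>c1\<in>CC A x0 a x. \<forall>c2\<in>CC A x0 a x.
      lam x0 b c1 = lam x0 b c2)"

definition strongly_orbitwise_abelian :: "'x \<Rightarrow> ('x \<Rightarrow> 'x) set \<Rightarrow> ('x list \<Rightarrow> 'x list) set \<Rightarrow> bool" where
  "strongly_orbitwise_abelian x0 A B \<longleftrightarrow> (\<forall>a\<in>A. \<forall>x.
      abelian (gen_grp {sect b [y] | b y. b \<in> B \<and> y \<in> XX A x0 a x}))"

end

theory Submission
  imports Defs "HOL-Library.Multiset"
begin

text \<open>
  Every element of \<open>G\<close> is the value of a word in the letters \<open>A \<union> B\<close>. We argue by induction on
  the number of directed letters of the word \<open>w\<close> and, for a fixed multiset of them with product \<open>b\<close>,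
  on the number of \<open>\<Lambda>\<^sub>b\<close>-steps after which the root permutation \<open>p\<close> of \<open>w\<close> becomes trivial.
  If \<open>p\<close> has order \<open>m\<close>, then \<open>w\<^sup>m\<close> fixes the first level, and its section at \<open>z\<close> is a power of the
  section of \<open>w\<^sup>l\<close> at \<open>z\<close>, \<open>l\<close> the length of the \<open>p\<close>-orbit of \<open>z\<close>. Along that orbit every directed
  letter of \<open>w\<close> sits at the vertex \<open>0\<close> at most once. If some letter never does, the section has fewer
  directed letters; if \<open>l = 1\<close>, it lies in \<open>B\<close>; otherwise its directed letters are a permutation of
  those of \<open>w\<close> and, by stability and strong orbitwise-abelianity, its root permutation is
  \<open>\<lambda>\<^sub>b(p, z) \<in> \<Lambda>\<^sub>b({p})\<close>, one step further along an eventually trivial orbit. Finally, either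
  finiteness hypothesis makes all but finitely many of these sections rooted of bounded order,
  so the sections have a common exponent.
\<close>

section \<open>Orbits and products of permutations\<close>

definition has_finite_order :: "('a \<Rightarrow> 'a) \<Rightarrow> bool" where
  "has_finite_order f \<longleftrightarrow> (\<exists>n>0. f ^^ n = id)"

lemma periodic_iff_has_finite_order: "periodic S \<longleftrightarrow> (\<forall>f\<in>S. has_finite_order f)"
  by (simp add: periodic_def has_finite_order_def)

lemma funpow_eq_id_if_dvd:
  assumes "f ^^ r = id" "r dvd n"
  shows "f ^^ n = id"
proof -
  obtain k where "n = r * k" using assms(2) by (auto elim: dvdE)
  then show ?thesis using assms(1) by (metis funpow_mult id_funpow)
qed

lemma common_exponent_cofinite:
  assumes "\<And>z. has_finite_order (f z)" "0 < E" "finite F" "\<And>z. z \<notin> F \<Longrightarrow> f z ^^ E = id"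
  shows "\<exists>N>0. \<forall>z. f z ^^ N = id"
proof -
  obtain r where r: "\<And>z. 0 < r z" "\<And>z. f z ^^ r z = id"
    using assms(1) unfolding has_finite_order_def by metis
  define N where "N = E * (\<Prod>z\<in>F. r z)"
  have "f z ^^ N = id" for z
  proof (cases "z \<in> F")
    case True
    then have "r z dvd N" using \<open>finite F\<close> by (simp add: N_def dvd_prodI)
    with r(2) show ?thesis by (rule funpow_eq_id_if_dvd)
  next
    case False
    then have "f z ^^ E = id" by (rule assms(4))
    then show ?thesis by (rule funpow_eq_id_if_dvd) (simp add: N_def)
  qed
  moreover have "0 < N" using assms(2) r(1) by (simp add: N_def prod_pos)
  ultimately show ?thesis by blast
qed

lemma
  assumes "(f ^^ m) z = z" "0 < m"
  shows orb_len_pos: "0 < orb_len f z"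
    and funpow_orb_len: "(f ^^ orb_len f z) z = z"
    and orb_len_le: "orb_len f z \<le> m"
proof -
  have m: "0 < m \<and> (f ^^ m) z = z" using assms by simp
  show "0 < orb_len f z" "(f ^^ orb_len f z) z = z"
    unfolding orb_len_def using LeastI[of "\<lambda>n. 0 < n \<and> (f ^^ n) z = z", OF m] by auto
  show "orb_len f z \<le> m"
    unfolding orb_len_def using Least_le[of "\<lambda>n. 0 < n \<and> (f ^^ n) z = z", OF m] .
qed

lemma funpow_neq_before_orb_len: "0 < k \<Longrightarrow> k < orb_len f z \<Longrightarrow> (f ^^ k) z \<noteq> z"
  unfolding orb_len_def using not_less_Least by blast

lemma orb_len_dvd:
  assumes "(f ^^ m) z = z" "0 < m"
  shows "orb_len f z dvd m"
proof -
  have "(f ^^ (m mod orb_len f z)) z = z"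
    using funpow_mod_eq[OF funpow_orb_len[OF assms]] assms(1) by simp
  moreover have "m mod orb_len f z < orb_len f z" using orb_len_pos[OF assms] by simp
  ultimately have "m mod orb_len f z = 0" using funpow_neq_before_orb_len by (metis neq0_conv)
  then show ?thesis by (simp add: mod_eq_0_iff_dvd)
qed

lemma funpow_inj_before_orb_len:
  assumes "inj f" "i < orb_len f z" "j < orb_len f z" "(f ^^ i) z = (f ^^ j) z"
  shows "i = j"
proof (rule ccontr)
  assume "i \<noteq> j"
  define s t where "s = min i j" and "t = max i j"
  have st: "s < t" "t < orb_len f z" "(f ^^ s) z = (f ^^ t) z"
    using assms(2-4) \<open>i \<noteq> j\<close> by (auto simp: s_def t_def min_def max_def)
  then have "(f ^^ s) ((f ^^ (t - s)) z) = (f ^^ s) z"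
    by (metis funpow_add comp_apply le_add_diff_inverse less_imp_le)
  then have "(f ^^ (t - s)) z = z" using inj_fn[OF \<open>inj f\<close>] by (meson injD)
  moreover have "0 < t - s" "t - s < orb_len f z" using st by auto
  ultimately show False using funpow_neq_before_orb_len[of "t - s" f z] by simp
qed

lemma funpow_conjg:
  assumes "bij c"
  shows "conjg c p ^^ k = conjg c (p ^^ k)"
proof (induction k)
  case 0
  show ?case using assms by (simp add: conjg_def bij_is_inj)
next
  case (Suc k)
  then show ?case
    using surj_f_inv_f[OF bij_is_surj[OF assms]] by (simp add: conjg_def fun_eq_iff)
qed

lemma orb_len_conjg:
  assumes "bij c"
  shows "orb_len (conjg c p) x = orb_len p (c x)"
proof -
  have "(conjg c p ^^ n) x = inv c ((p ^^ n) (c x))" for n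
    by (simp add: funpow_conjg[OF assms]) (simp add: conjg_def)
  then have "(conjg c p ^^ n) x = x \<longleftrightarrow> (p ^^ n) (c x) = c x" for n
    using assms by (metis bij_inv_eq_iff)
  then show ?thesis by (simp add: orb_len_def)
qed

lemma sum_orbit_shift:
  fixes g :: "'a \<Rightarrow> 'b::cancel_comm_monoid_add"
  assumes "(f ^^ l) z = z"
  shows "(\<Sum>j<l. g ((f ^^ (j + s)) z)) = (\<Sum>j<l. g ((f ^^ j) z))"
proof (induction s)
  case (Suc s)
  define h where "h j = g ((f ^^ (j + s)) z)" for j
  have "h l = h 0"
    using assms by (simp add: h_def add.commute[of l] funpow_add)
  have "(\<Sum>j<l. h (Suc j)) + h 0 = (\<Sum>j<Suc l. h j)"
    by (subst sum.lessThan_Suc_shift) (simp add: add.commute)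
  also have "\<dots> = (\<Sum>j<l. h j) + h 0" using \<open>h l = h 0\<close> by simp
  finally have "(\<Sum>j<l. h (Suc j)) = (\<Sum>j<l. h j)" by simp
  then show ?case using Suc by (simp add: h_def)
qed simp

lemma finite_orbit_visits:
  fixes p :: "'a \<Rightarrow> 'a"
  assumes "finite Q" "inj p" "\<And>q. q \<in> Q \<Longrightarrow> inj (d q) \<and> finite (Y q)"
  shows "finite {z. \<exists>q\<in>Q. \<exists>j<m. d q ((p ^^ j) z) \<in> Y q}"
proof -
  have "{z. \<exists>q\<in>Q. \<exists>j<m. d q ((p ^^ j) z) \<in> Y q} = (\<Union>q\<in>Q. \<Union>j<m. (d q \<circ> p ^^ j) -` Y q)"
    by force
  moreover have "inj (d q \<circ> p ^^ j)" if "q \<in> Q" for q j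
    using assms(2) assms(3)[OF that] by (simp add: inj_compose)
  ultimately show ?thesis
    using assms by (simp add: finite_vimageI)
qed

lemma prod_right_append: "prod_right (xs @ ys) = prod_right ys \<circ> prod_right xs"
  by (induction xs) auto

lemma prod_right_concat: "prod_right (concat xss) = prod_right (map prod_right xss)"
  by (induction xss) (auto simp: prod_right_append)

lemma prod_right_eq_id: "set xs \<subseteq> {id} \<Longrightarrow> prod_right xs = id"
  by (induction xs) auto

lemma prod_right_commute:
  assumes "\<forall>y\<in>set ys. a \<circ> y = y \<circ> a"
  shows "a \<circ> prod_right ys = prod_right ys \<circ> a"
  using assms by (induction ys) (auto simp: comp_assoc[symmetric], metis comp_assoc)

definition pairwise_commute :: "('a \<Rightarrow> 'a) set \<Rightarrow> bool" where
  "pairwise_commute S \<longleftrightarrow> (\<forall>f\<in>S. \<forall>g\<in>S. f \<circ> g = g \<circ> f)"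

lemma prod_right_mset_eq:
  assumes "pairwise_commute S" "set xs \<subseteq> S" "mset xs = mset ys"
  shows "prod_right xs = prod_right ys"
  using assms(2,3)
proof (induction xs arbitrary: ys)
  case (Cons a xs)
  then have "a \<in> set ys" by (metis list.set_intros(1) set_mset_mset)
  then obtain ys1 ys2 where ys: "ys = ys1 @ a # ys2" by (meson split_list)
  have "set ys = set (a # xs)" using Cons.prems(2) by (metis set_mset_mset)
  then have "a \<circ> prod_right ys1 = prod_right ys1 \<circ> a"
    using Cons.prems(1) assms(1) ys by (intro prod_right_commute) (auto simp: pairwise_commute_def)
  moreover have "prod_right xs = prod_right (ys1 @ ys2)"
    using Cons ys by simp
  ultimately show ?case
    by (simp add: ys prod_right_append comp_assoc)
qed simp

lemma prod_right_map_comp: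
  assumes "pairwise_commute S" "\<forall>k\<in>set ks. f k \<in> S \<and> g k \<in> S"
  shows "prod_right (map (\<lambda>k. f k \<circ> g k) ks) = prod_right (map f ks) \<circ> prod_right (map g ks)"
  using assms(2)
proof (induction ks)
  case (Cons k ks)
  have "f k \<circ> prod_right (map g ks) = prod_right (map g ks) \<circ> f k"
    using Cons.prems assms(1) by (intro prod_right_commute) (auto simp: pairwise_commute_def)
  then show ?case
    using Cons by (simp add: fun_eq_iff)
qed simp

lemma
  assumes "perm_group S"
  shows perm_group_bij: "f \<in> S \<Longrightarrow> bij f"
    and perm_group_id: "id \<in> S"
    and perm_group_comp: "f \<in> S \<Longrightarrow> g \<in> S \<Longrightarrow> g \<circ> f \<in> S"
    and perm_group_inv: "f \<in> S \<Longrightarrow> inv f \<in> S"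
  using assms by (auto simp: perm_group_def)

lemma perm_group_funpow: "perm_group S \<Longrightarrow> f \<in> S \<Longrightarrow> f ^^ n \<in> S"
  by (induction n) (simp_all add: perm_group_id perm_group_comp)

lemma perm_group_prod_right: "perm_group S \<Longrightarrow> set fs \<subseteq> S \<Longrightarrow> prod_right fs \<in> S"
  by (induction fs) (simp_all add: perm_group_id perm_group_comp)

lemma rooted_Nil [simp]: "rooted a [] = []"
  and rooted_Cons [simp]: "rooted a (z # v) = a z # v"
  by (simp_all add: rooted_def)

lemma rooted_id [simp]: "rooted id = id"
  by (simp add: rooted_def fun_eq_iff split: list.splits)

lemma rooted_comp: "rooted (f \<circ> g) = rooted f \<circ> rooted g"
  by (simp add: rooted_def fun_eq_iff split: list.splits)

lemma rooted_funpow: "rooted f ^^ n = rooted (f ^^ n)"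
proof (induction n)
  case (Suc n)
  then show ?case by (simp only: funpow.simps rooted_comp)
qed (simp only: funpow.simps(1) rooted_id)

lemma inj_rooted: "inj rooted"
proof (rule injI)
  fix f g :: "'a \<Rightarrow> 'a"
  assume "rooted f = rooted g"
  then have "rooted f [z] = rooted g [z]" for z by simp
  then show "f = g" by (simp add: fun_eq_iff)
qed

lemma inv_rooted:
  assumes "bij a"
  shows "inv (rooted a) = rooted (inv a)"
proof (rule inv_unique_comp)
  have "a \<circ> inv a = id" "inv a \<circ> a = id"
    using bij_is_surj[OF assms] bij_is_inj[OF assms] surj_iff inj_iff by blast+
  then show "rooted a \<circ> rooted (inv a) = id" "rooted (inv a) \<circ> rooted a = id"
    by (simp_all add: rooted_comp[symmetric])
qed

lemma perm_of_id [simp]: "perm_of id = id"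
  by (simp add: perm_of_def fun_eq_iff)

lemma perm_of_rooted [simp]: "perm_of (rooted a) = a"
  by (simp add: perm_of_def fun_eq_iff)

lemma sum_sum_list_swap: "(\<Sum>j\<in>J. \<Sum>q\<leftarrow>qs. f j q) = (\<Sum>q\<leftarrow>qs. \<Sum>j\<in>J. f j q)"
  by (induction qs) (simp_all add: sum.distrib)

lemma mset_concat_map_upt: "mset (concat (map f [0..<n])) = (\<Sum>j<n. mset (f j))"
  by (induction n) (simp_all add: add.commute)

lemma mset_map_upt: "mset (map f [m..<n]) = (\<Sum>k\<in>{m..<n}. {#f k#})"
  by (induction n) (auto simp: add.commute)

lemma size_sum_list_map:
  fixes f :: "'a \<Rightarrow> 'b multiset"
  shows "size (\<Sum>x\<leftarrow>xs. f x) = (\<Sum>x\<leftarrow>xs. size (f x))"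
  by (induction xs) auto

lemma sum_list_single_eq_mset: "(\<Sum>x\<leftarrow>xs. {#f x#}) = mset (map f xs)"
  by (induction xs) auto

lemma sum_single_if_eq_replicate_mset:
  "(\<Sum>j<(l::nat). if P j then {#x#} else {#}) = replicate_mset (card {j. j < l \<and> P j}) x"
proof (induction l)
  case (Suc l)
  have "{j. j < Suc l \<and> P j} = (if P l then insert l else id) {j. j < l \<and> P j}"
    by (auto simp: less_Suc_eq)
  then show ?case using Suc by (simp add: replicate_mset_Suc)
qed simp

lemma sum_list_le_one_cases:
  assumes "\<forall>x\<in>set xs. f x \<le> (1::nat)"
  shows "sum_list (map f xs) < length xs \<or> (\<forall>x\<in>set xs. f x = 1)"
  using assms
proof (induction xs)
  case (Cons x xs)
  then consider "sum_list (map f xs) < length xs" | "\<forall>y\<in>set xs. f y = 1" by auto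
  then show ?case
  proof cases
    case 1
    then show ?thesis using Cons.prems by auto
  next
    case 2
    then have "sum_list (map f xs) = length xs"
      by (simp add: map_cong[OF refl, of xs f "\<lambda>_. 1"] sum_list_triv)
    then show ?thesis using 2 Cons.prems by (cases "f x = 1") auto
  qed
qed simp

section \<open>Words in the generators\<close>

type_synonym 'x letter = "('x \<Rightarrow> 'x) + ('x list \<Rightarrow> 'x list)"

fun word_eval :: "'x letter list \<Rightarrow> 'x list \<Rightarrow> 'x list" where
  "word_eval [] = id"
| "word_eval (Inl a # w) = word_eval w \<circ> rooted a"
| "word_eval (Inr b # w) = word_eval w \<circ> b"

fun a_letters :: "'x letter list \<Rightarrow> ('x \<Rightarrow> 'x) list" where
  "a_letters [] = []"
| "a_letters (Inl a # w) = a # a_letters w"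
| "a_letters (Inr b # w) = a_letters w"

fun b_letters :: "'x letter list \<Rightarrow> ('x list \<Rightarrow> 'x list) list" where
  "b_letters [] = []"
| "b_letters (Inl a # w) = b_letters w"
| "b_letters (Inr b # w) = b # b_letters w"

definition word_root :: "'x letter list \<Rightarrow> 'x \<Rightarrow> 'x" where
  "word_root w = prod_right (a_letters w)"

text \<open>Each directed letter \<open>b\<close> of a word, paired with the root permutation \<open>d\<close> of the prefix
  before it: on words starting with \<open>z\<close> this letter acts at the first-level vertex \<open>d z\<close>.\<close>

fun b_occurrences :: "'x letter list \<Rightarrow> (('x list \<Rightarrow> 'x list) \<times> ('x \<Rightarrow> 'x)) list" where
  "b_occurrences [] = []"
| "b_occurrences (Inl a # w) = map (\<lambda>(b, d). (b, d \<circ> a)) (b_occurrences w)"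
| "b_occurrences (Inr b # w) = (b, id) # b_occurrences w"

definition sect_perm :: "('x list \<Rightarrow> 'x list) \<Rightarrow> 'x \<Rightarrow> 'x \<Rightarrow> 'x" where
  "sect_perm b y = perm_of (sect b [y])"

definition sect_letter :: "'x \<Rightarrow> 'x \<Rightarrow> ('x list \<Rightarrow> 'x list) \<times> ('x \<Rightarrow> 'x) \<Rightarrow> 'x letter" where
  "sect_letter x0 z q = (if snd q z = x0 then Inr (fst q) else Inl (sect_perm (fst q) (snd q z)))"

text \<open>The section at the first-level vertex \<open>z\<close>: rooted letters have trivial sections, and an
  occurrence \<open>(b, d)\<close> contributes \<open>b|\<^bsub>d z\<^esub>\<close>, which is \<open>b\<close> itself if \<open>d z = x0\<close> and rooted otherwise
  (see \<open>word_eval_Cons\<close>).\<close>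

definition word_sect :: "'x \<Rightarrow> 'x letter list \<Rightarrow> 'x \<Rightarrow> 'x letter list" where
  "word_sect x0 w z = map (sect_letter x0 z) (b_occurrences w)"

definition word_pow :: "'a list \<Rightarrow> nat \<Rightarrow> 'a list" where
  "word_pow w k = concat (replicate k w)"

lemma sect_perm_id [simp]: "sect_perm id y = id"
  by (simp add: sect_perm_def sect_def perm_of_def fun_eq_iff)

lemma word_root_simps [simp]:
  "word_root [] = id"
  "word_root (Inl a # w) = word_root w \<circ> a"
  "word_root (Inr b # w) = word_root w"
  by (simp_all add: word_root_def)

lemma a_letters_append: "a_letters (u @ v) = a_letters u @ a_letters v"
  by (induction u rule: a_letters.induct) auto

lemma b_letters_append: "b_letters (u @ v) = b_letters u @ b_letters v"
  by (induction u rule: b_letters.induct) auto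

lemma word_eval_append: "word_eval (u @ v) = word_eval v \<circ> word_eval u"
  by (induction u rule: a_letters.induct) (auto simp: comp_assoc)

lemma word_root_append: "word_root (u @ v) = word_root v \<circ> word_root u"
  by (simp add: word_root_def a_letters_append prod_right_append)

lemma b_letters_eq_map_fst: "b_letters w = map fst (b_occurrences w)"
  by (induction w rule: b_occurrences.induct) (auto simp: case_prod_beta)

lemma b_occurrences_append:
  "b_occurrences (u @ v) = b_occurrences u @ map (\<lambda>(b, d). (b, d \<circ> word_root u)) (b_occurrences v)"
  by (induction u rule: b_occurrences.induct) (auto simp: case_prod_beta comp_assoc)

lemma word_sect_Nil [simp]: "word_sect x0 [] z = []"
  by (simp add: word_sect_def)

lemma word_sect_Inl [simp]: "word_sect x0 (Inl a # w) z = word_sect x0 w (a z)"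
  by (simp add: word_sect_def sect_letter_def case_prod_beta comp_def)

lemma word_sect_Inr [simp]:
  "word_sect x0 (Inr b # w) z = (if z = x0 then Inr b else Inl (sect_perm b z)) # word_sect x0 w z"
  by (simp add: word_sect_def sect_letter_def)

lemma word_sect_append:
  "word_sect x0 (u @ v) z = word_sect x0 u z @ word_sect x0 v (word_root u z)"
  by (simp add: word_sect_def b_occurrences_append sect_letter_def case_prod_beta comp_def)

lemma word_pow_Suc: "word_pow w (Suc k) = w @ word_pow w k"
  by (simp add: word_pow_def)

lemma word_pow_0 [simp]: "word_pow w 0 = []"
  by (simp add: word_pow_def)

lemma word_pow_add: "word_pow w (m + n) = word_pow w m @ word_pow w n"
  by (simp add: word_pow_def replicate_add)

lemma word_eval_pow: "word_eval (word_pow w k) = word_eval w ^^ k"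
  by (induction k) (simp_all add: word_pow_Suc word_eval_append funpow_swap1)

lemma word_root_pow: "word_root (word_pow w k) = word_root w ^^ k"
  by (induction k) (simp_all add: word_pow_Suc word_root_append funpow_swap1)

lemma word_sect_pow:
  "word_sect x0 (word_pow w k) z = concat (map (\<lambda>j. word_sect x0 w ((word_root w ^^ j) z)) [0..<k])"
proof (induction k arbitrary: z)
  case (Suc k)
  then show ?case
    by (simp add: word_pow_Suc word_sect_append upt_conv_Cons map_Suc_upt[symmetric] funpow_swap1
        comp_def del: upt_Suc)
qed simp

lemma word_sect_pow_mult:
  assumes "(word_root w ^^ l) z = z"
  shows "word_sect x0 (word_pow w (l * q)) z = word_pow (word_sect x0 (word_pow w l) z) q"
  by (induction q) (simp_all add: word_pow_add word_pow_Suc word_sect_append word_root_pow assms)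

lemma a_letters_concat: "a_letters (concat ws) = concat (map a_letters ws)"
  by (induction ws) (simp_all add: a_letters_append)

lemma b_letters_concat: "b_letters (concat ws) = concat (map b_letters ws)"
  by (induction ws) (simp_all add: b_letters_append)

lemma a_letters_map_sect_letter:
  "a_letters (map (sect_letter x0 z) P) = [sect_perm (fst q) (snd q z). q \<leftarrow> P, snd q z \<noteq> x0]"
  by (induction P) (auto simp: sect_letter_def)

lemma b_letters_map_sect_letter:
  "b_letters (map (sect_letter x0 z) P) = [fst q. q \<leftarrow> P, snd q z = x0]"
  by (induction P) (auto simp: sect_letter_def)

lemma mset_filter_map: "mset [f q. q \<leftarrow> P, Q q] = (\<Sum>q\<leftarrow>P. if Q q then {#f q#} else {#})"
  by (induction P) auto

lemma mset_a_letters_sect_pow: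
  "mset (a_letters (word_sect x0 (word_pow w l) z)) =
    (\<Sum>q\<leftarrow>b_occurrences w. \<Sum>j<l. if snd q ((word_root w ^^ j) z) \<noteq> x0
       then {#sect_perm (fst q) (snd q ((word_root w ^^ j) z))#} else {#})"
proof -
  have "mset (a_letters (word_sect x0 (word_pow w l) z)) =
      (\<Sum>j<l. mset (a_letters (word_sect x0 w ((word_root w ^^ j) z))))"
    by (simp add: word_sect_pow a_letters_concat comp_def mset_concat_map_upt del: mset_concat)
  then show ?thesis
    by (simp add: word_sect_def a_letters_map_sect_letter mset_filter_map sum_sum_list_swap
        if_distrib[of mset] del: mset_concat)
qed

lemma mset_b_letters_sect_pow:
  "mset (b_letters (word_sect x0 (word_pow w l) z)) =
    (\<Sum>q\<leftarrow>b_occurrences w. replicate_mset (card {j. j < l \<and> snd q ((word_root w ^^ j) z) = x0}) (fst q))"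
proof -
  have "mset (b_letters (word_sect x0 (word_pow w l) z)) =
      (\<Sum>j<l. mset (b_letters (word_sect x0 w ((word_root w ^^ j) z))))"
    by (simp add: word_sect_pow b_letters_concat comp_def mset_concat_map_upt del: mset_concat)
  then show ?thesis
    by (simp add: word_sect_def b_letters_map_sect_letter mset_filter_map sum_sum_list_swap
        sum_single_if_eq_replicate_mset del: mset_concat)
qed

lemma set_a_letters_sect_pow:
  "set (a_letters (word_sect x0 (word_pow w l) z)) \<subseteq>
    {sect_perm (fst q) (snd q ((word_root w ^^ j) z)) | q j.
      q \<in> set (b_occurrences w) \<and> j < l \<and> snd q ((word_root w ^^ j) z) \<noteq> x0}"
  unfolding word_sect_pow by (force simp: a_letters_concat word_sect_def a_letters_map_sect_letter)

lemma b_letters_sect_pow_Nil: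
  assumes "\<forall>q\<in>set (b_occurrences w). \<forall>j<l. snd q ((word_root w ^^ j) z) \<noteq> x0"
  shows "b_letters (word_sect x0 (word_pow w l) z) = []"
proof -
  have "mset (b_letters (word_sect x0 (word_pow w l) z)) = (\<Sum>q\<leftarrow>b_occurrences w. {#})"
    unfolding mset_b_letters_sect_pow using assms by (intro arg_cong[where f = sum_list] map_cong) auto
  then show ?thesis by simp
qed

lemma word_eval_eq_rooted: "b_letters w = [] \<Longrightarrow> word_eval w = rooted (word_root w)"
  by (induction w rule: b_letters.induct) (simp_all add: rooted_comp)

lemma word_eval_eq_prod_right: "a_letters w = [] \<Longrightarrow> word_eval w = prod_right (b_letters w)"
  by (induction w rule: a_letters.induct) simp_all

lemma funpow_Cons:
  assumes "\<And>z v. g (z # v) = z # G z v"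
  shows "(g ^^ n) (z # v) = z # (G z ^^ n) v"
  by (induction n arbitrary: v) (simp_all add: assms)

section \<open>Constant spinal data\<close>

locale cs_data =
  fixes x0 :: 'x and A :: "('x \<Rightarrow> 'x) set" and B :: "('x list \<Rightarrow> 'x list) set"
  assumes CS_data: "CS_data x0 A B"
begin

lemma A_group: "perm_group A" and B_group: "perm_group B"
  using CS_data unfolding CS_data_def by blast+

lemma sect_x0: "b \<in> B \<Longrightarrow> sect b [x0] = b"
  using CS_data unfolding CS_data_def by blast

lemma
  assumes "b \<in> B" "y \<noteq> x0"
  shows sect_eq_rooted: "sect b [y] = rooted (sect_perm b y)"
    and sect_perm_in_A: "sect_perm b y \<in> A"
proof -
  obtain a where "a \<in> A" "sect b [y] = rooted a"
    using CS_data assms unfolding CS_data_def by blast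
  then show "sect b [y] = rooted (sect_perm b y)" "sect_perm b y \<in> A"
    by (simp_all add: sect_perm_def)
qed

lemma
  assumes "b \<in> B"
  shows B_length: "length (b u) = length u"
    and B_take: "take (length u) (b (u @ v)) = b u"
    and B_St1: "b [z] = [z]"
  using CS_data assms unfolding CS_data_def tree_aut_def in_St1_def by blast+

lemma B_Nil: "b \<in> B \<Longrightarrow> b [] = []"
  using B_length[of b "[]"] by simp

lemma B_Cons:
  assumes "b \<in> B"
  shows "b (z # v) = z # sect b [z] v"
proof -
  have "take 1 (b (z # v)) = [z]"
    using B_take[OF assms, of "[z]" v] B_St1[OF assms] by simp
  have "b (z # v) = take 1 (b (z # v)) @ drop 1 (b (z # v))"
    by (rule append_take_drop_id[symmetric])
  also have "\<dots> = z # sect b [z] v"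
    using \<open>take 1 (b (z # v)) = [z]\<close> by (simp add: sect_def)
  finally show ?thesis .
qed

lemma sect_perm_comp:
  assumes "f \<in> B" "b \<in> B" "y \<noteq> x0"
  shows "sect_perm (f \<circ> b) y = sect_perm f y \<circ> sect_perm b y"
proof -
  have "sect (f \<circ> b) [y] = sect f [y] \<circ> sect b [y]"
  proof
    fix v
    have "sect (f \<circ> b) [y] v = drop 1 (f (b (y # v)))" by (simp add: sect_def)
    also have "\<dots> = sect f [y] (sect b [y] v)" using B_Cons[OF assms(1)] B_Cons[OF assms(2)] by simp
    finally show "sect (f \<circ> b) [y] v = (sect f [y] \<circ> sect b [y]) v" by simp
  qed
  moreover have "f \<circ> b \<in> B" using assms(2,1) by (rule perm_group_comp[OF B_group])
  ultimately have "rooted (sect_perm (f \<circ> b) y) = rooted (sect_perm f y \<circ> sect_perm b y)"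
    using assms by (simp add: sect_eq_rooted rooted_comp)
  then show ?thesis by (rule injD[OF inj_rooted])
qed

definition is_word :: "'x letter list \<Rightarrow> bool" where
  "is_word w \<longleftrightarrow> set w \<subseteq> Inl ` A \<union> Inr ` B"

lemma is_word_simps [simp]:
  "is_word []"
  "is_word (Inl a # w) \<longleftrightarrow> a \<in> A \<and> is_word w"
  "is_word (Inr b # w) \<longleftrightarrow> b \<in> B \<and> is_word w"
  "is_word (u @ v) \<longleftrightarrow> is_word u \<and> is_word v"
  by (auto simp: is_word_def)

lemma is_word_pow: "is_word w \<Longrightarrow> is_word (word_pow w k)"
  by (induction k) (simp_all add: word_pow_Suc)

lemma is_word_sect: "is_word w \<Longrightarrow> is_word (word_sect x0 w z)"
  by (induction w arbitrary: z rule: b_letters.induct) (auto simp: sect_perm_in_A)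

lemma a_letters_in_A: "is_word w \<Longrightarrow> set (a_letters w) \<subseteq> A"
  by (induction w rule: a_letters.induct) auto

lemma b_letters_in_B: "is_word w \<Longrightarrow> set (b_letters w) \<subseteq> B"
  by (induction w rule: b_letters.induct) auto

lemma word_root_in_A: "is_word w \<Longrightarrow> word_root w \<in> A"
  unfolding word_root_def by (rule perm_group_prod_right[OF A_group a_letters_in_A])

lemma b_occurrences_in: "is_word w \<Longrightarrow> q \<in> set (b_occurrences w) \<Longrightarrow> fst q \<in> B \<and> snd q \<in> A"
  by (induction w arbitrary: q rule: b_occurrences.induct)
    (auto simp: perm_group_comp[OF A_group] perm_group_id[OF A_group])

lemma word_eval_Nil: "is_word w \<Longrightarrow> word_eval w [] = []"
  by (induction w rule: b_letters.induct) (simp_all add: B_Nil)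

lemma word_eval_Cons:
  "is_word w \<Longrightarrow> word_eval w (z # v) = word_root w z # word_eval (word_sect x0 w z) v"
  by (induction w arbitrary: z v rule: b_letters.induct)
    (auto simp: B_Cons sect_x0 sect_eq_rooted)

lemma word_eval_funpow_eq_id:
  assumes "is_word u" "word_root u = id" "\<And>z. word_eval (word_sect x0 u z) ^^ N = id"
  shows "word_eval u ^^ N = id"
proof
  fix xs
  show "(word_eval u ^^ N) xs = id xs"
  proof (cases xs)
    case Nil
    have "(word_eval u ^^ k) [] = []" for k
      by (induction k) (simp_all add: word_eval_Nil[OF assms(1)])
    then show ?thesis using Nil by simp
  next
    case (Cons z v)
    have "(word_eval u ^^ N) (z # v) = z # (word_eval (word_sect x0 u z) ^^ N) v"
      by (rule funpow_Cons) (simp add: word_eval_Cons[OF assms(1)] assms(2))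
    then show ?thesis using Cons assms(3) by simp
  qed
qed

lemma CS_group_word: "g \<in> CS_group A B \<Longrightarrow> \<exists>w. is_word w \<and> g = word_eval w"
  unfolding CS_group_def
proof (induction rule: gen_grp.induct)
  case gen_id
  show ?case by (rule exI[of _ "[]"]) simp
next
  case (gen_gen s)
  then show ?case
    by (auto intro: exI[of _ "[Inl a]" for a] exI[of _ "[Inr s]"])
next
  case (gen_inv s)
  then consider a where "a \<in> A" "s = rooted a" | "s \<in> B" by blast
  then show ?case
  proof cases
    case 1
    then show ?thesis
      by (intro exI[of _ "[Inl (inv a)]"])
        (simp add: inv_rooted perm_group_bij[OF A_group] perm_group_inv[OF A_group])
  next
    case 2
    then show ?thesis
      by (intro exI[of _ "[Inr (inv s)]"]) (simp add: perm_group_inv[OF B_group])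
  qed
next
  case (gen_mult g h)
  then obtain u v where "is_word u" "g = word_eval u" "is_word v" "h = word_eval v" by blast
  then show ?case by (intro exI[of _ "u @ v"]) (simp add: word_eval_append)
qed

lemma card_visits_x0_le_1:
  assumes "is_word w" "q \<in> set (b_occurrences w)"
  shows "card {j. j < orb_len (word_root w) z \<and> snd q ((word_root w ^^ j) z) = x0} \<le> 1"
proof -
  define p where "p = word_root w"
  have inj_d: "inj (snd q)" and inj_p: "inj p"
    using b_occurrences_in[OF assms] word_root_in_A[OF assms(1)] perm_group_bij[OF A_group]
    by (auto simp: p_def intro: bij_is_inj)
  have "j1 = j2"
    if "j1 < orb_len p z" "snd q ((p ^^ j1) z) = x0" "j2 < orb_len p z" "snd q ((p ^^ j2) z) = x0"
    for j1 j2
  proof -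
    have "(p ^^ j1) z = (p ^^ j2) z" using that injD[OF inj_d] by simp
    then show ?thesis using that by (intro funpow_inj_before_orb_len[OF inj_p])
  qed
  then show ?thesis
    using card_le_Suc0_iff_eq[of "{j. j < orb_len p z \<and> snd q ((p ^^ j) z) = x0}"]
    by (auto simp: p_def)
qed

lemma sect_pow_b_letters_cases:
  fixes w :: "'x letter list" and z :: 'x
  assumes w: "is_word w"
  defines "l \<equiv> orb_len (word_root w) z"
  defines "h \<equiv> word_sect x0 (word_pow w l) z"
  shows "length (b_letters h) < length (b_letters w) \<or>
    (\<forall>q\<in>set (b_occurrences w). \<exists>J<l. snd q ((word_root w ^^ J) z) = x0) \<and>
    mset (b_letters h) = mset (b_letters w)"
proof -
  define visits where "visits q = {j. j < l \<and> snd q ((word_root w ^^ j) z) = x0}"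
    for q :: "('x list \<Rightarrow> 'x list) \<times> ('x \<Rightarrow> 'x)"
  have mset_h: "mset (b_letters h) = (\<Sum>q\<leftarrow>b_occurrences w. replicate_mset (card (visits q)) (fst q))"
    by (simp add: h_def visits_def mset_b_letters_sect_pow del: mset_map)
  have "\<forall>q\<in>set (b_occurrences w). card (visits q) \<le> 1"
    using card_visits_x0_le_1[OF w] by (simp add: visits_def l_def)
  then have "(\<Sum>q\<leftarrow>b_occurrences w. card (visits q)) < length (b_occurrences w) \<or>
      (\<forall>q\<in>set (b_occurrences w). card (visits q) = 1)"
    by (rule sum_list_le_one_cases)
  then show ?thesis
  proof
    assume "(\<Sum>q\<leftarrow>b_occurrences w. card (visits q)) < length (b_occurrences w)"
    moreover have "length (b_letters h) = (\<Sum>q\<leftarrow>b_occurrences w. card (visits q))"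
      using arg_cong[OF mset_h, of size] by (simp add: size_sum_list_map del: mset_map)
    ultimately show ?thesis by (simp add: b_letters_eq_map_fst)
  next
    assume all_visit: "\<forall>q\<in>set (b_occurrences w). card (visits q) = 1"
    then have "\<forall>q\<in>set (b_occurrences w). \<exists>J<l. snd q ((word_root w ^^ J) z) = x0"
      by (fastforce simp: visits_def card_1_singleton_iff)
    moreover have "mset (b_letters h) = (\<Sum>q\<leftarrow>b_occurrences w. {#fst q#})"
      unfolding mset_h using all_visit by (intro arg_cong[where f = sum_list] map_cong) simp_all
    ultimately show ?thesis by (simp add: sum_list_single_eq_mset b_letters_eq_map_fst)
  qed
qed

lemma finite_sect_pow_visits:
  assumes w: "is_word w" and m: "0 < m" "word_root w ^^ m = id"
    and finite_Y: "\<And>q. q \<in> set (b_occurrences w) \<Longrightarrow> finite (Y q)"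
  shows "finite {z. \<exists>q\<in>set (b_occurrences w). \<exists>j<orb_len (word_root w) z.
    snd q ((word_root w ^^ j) z) \<in> Y q}"
proof -
  define p where "p = word_root w"
  have "inj p" "\<And>q. q \<in> set (b_occurrences w) \<Longrightarrow> inj (snd q)"
    using word_root_in_A[OF w] b_occurrences_in[OF w] perm_group_bij[OF A_group]
    by (auto simp: p_def intro: bij_is_inj)
  then have "finite {z. \<exists>q\<in>set (b_occurrences w). \<exists>j<m. snd q ((p ^^ j) z) \<in> Y q}"
    using finite_Y by (intro finite_orbit_visits) simp_all
  moreover have "orb_len p z \<le> m" for z
    using orb_len_le[of m p z] m by (simp add: p_def)
  then have "{z. \<exists>q\<in>set (b_occurrences w). \<exists>j<orb_len p z. snd q ((p ^^ j) z) \<in> Y q}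
      \<subseteq> {z. \<exists>q\<in>set (b_occurrences w). \<exists>j<m. snd q ((p ^^ j) z) \<in> Y q}"
    using less_le_trans by blast
  ultimately show ?thesis unfolding p_def by (rule finite_subset[rotated])
qed

lemma sect_pow_b_letters_Nil_cofinite:
  assumes w: "is_word w" and m: "0 < m" "word_root w ^^ m = id"
  shows "\<exists>F. finite F \<and>
    (\<forall>z. z \<notin> F \<longrightarrow> b_letters (word_sect x0 (word_pow w (orb_len (word_root w) z)) z) = [])"
proof -
  let ?F = "{z. \<exists>q\<in>set (b_occurrences w). \<exists>j<orb_len (word_root w) z.
    snd q ((word_root w ^^ j) z) \<in> {x0}}"
  have "finite ?F" by (rule finite_sect_pow_visits[OF w m]) simp
  moreover have "b_letters (word_sect x0 (word_pow w (orb_len (word_root w) z)) z) = []" if "z \<notin> ?F" for z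
    using that by (intro b_letters_sect_pow_Nil) auto
  ultimately show ?thesis by blast
qed

lemma sect_pow_a_letters_id_cofinite:
  assumes w: "is_word w" and m: "0 < m" "word_root w ^^ m = id"
    and support: "finite_support x0 B"
  shows "\<exists>F. finite F \<and>
    (\<forall>z. z \<notin> F \<longrightarrow> set (a_letters (word_sect x0 (word_pow w (orb_len (word_root w) z)) z)) \<subseteq> {id})"
proof -
  define p where "p = word_root w"
  let ?F = "{z. \<exists>q\<in>set (b_occurrences w). \<exists>j<orb_len p z.
    snd q ((p ^^ j) z) \<in> {y. y \<noteq> x0 \<and> sect (fst q) [y] \<noteq> id}}"
  have "finite ?F"
    unfolding p_def by (rule finite_sect_pow_visits[OF w m])
      (use support b_occurrences_in[OF w] in \<open>auto simp: finite_support_def\<close>)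
  moreover have "set (a_letters (word_sect x0 (word_pow w (orb_len p z)) z)) \<subseteq> {id}" if "z \<notin> ?F" for z
  proof
    fix x assume "x \<in> set (a_letters (word_sect x0 (word_pow w (orb_len p z)) z))"
    then obtain q j where q: "q \<in> set (b_occurrences w)" "j < orb_len p z" "snd q ((p ^^ j) z) \<noteq> x0"
      "x = sect_perm (fst q) (snd q ((p ^^ j) z))"
      using set_a_letters_sect_pow[of x0 w "orb_len p z" z] unfolding p_def by blast
    then have "sect (fst q) [snd q ((p ^^ j) z)] = id"
      using that by blast
    then show "x \<in> {id}" by (simp add: q(4) sect_perm_def)
  qed
  ultimately show ?thesis unfolding p_def by blast
qed

lemma word_eval_sect_in_B:
  assumes "is_word w" "\<forall>q\<in>set (b_occurrences w). snd q z = x0"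
  shows "word_eval (word_sect x0 w z) \<in> B"
proof -
  have "a_letters (word_sect x0 w z) = []"
    using assms(2) by (simp add: word_sect_def a_letters_map_sect_letter)
  then have "word_eval (word_sect x0 w z) = prod_right (b_letters (word_sect x0 w z))"
    by (rule word_eval_eq_prod_right)
  also have "\<dots> \<in> B"
    using perm_group_prod_right[OF B_group b_letters_in_B[OF is_word_sect[OF assms(1)]]] .
  finally show ?thesis .
qed

lemma conjugate_shifting_orbit:
  assumes "p \<in> A" "d \<in> A" "(p ^^ l) z = z" "orb_len p z = l" "J < l"
    and visit: "d ((p ^^ J) z) = x0"
  obtains a where "a \<in> CC A x0 p z" "orb_len a x0 = l" "\<And>k. (a ^^ k) x0 = d ((p ^^ (k + J)) z)"
proof -
  \<comment> \<open>\<open>c\<close> maps \<open>x0\<close> to \<open>z\<close> and \<open>d (p\<^bsup>k+J\<^esup> z)\<close> to \<open>p\<^bsup>k\<^esup> z\<close>, so conjugating \<open>p\<close> by it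
    turns the vertices visited by \<open>d\<close> along the orbit into the orbit of \<open>x0\<close>.\<close>
  define c where "c = p ^^ (l - J) \<circ> inv d"
  have bij_d: "bij d" using assms(2) by (rule perm_group_bij[OF A_group])
  have c_A: "c \<in> A"
    unfolding c_def using assms(1,2) A_group
    by (simp add: perm_group_comp perm_group_inv perm_group_funpow)
  then have bij_c: "bij c" by (rule perm_group_bij[OF A_group])
  have c_shift: "c (d ((p ^^ (k + J)) z)) = (p ^^ k) z" for k
  proof -
    have "(p ^^ (l - J)) ((p ^^ (k + J)) z) = (p ^^ (l - J + (k + J))) z"
      by (simp only: funpow_add comp_apply)
    moreover have "l - J + (k + J) = k + l" using \<open>J < l\<close> by simp
    ultimately have "c (d ((p ^^ (k + J)) z)) = (p ^^ (k + l)) z"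
      using bij_d by (simp add: c_def bij_is_inj)
    also have "\<dots> = (p ^^ k) z"
      using assms(3) by (simp add: funpow_add)
    finally show ?thesis .
  qed
  have c_x0: "c x0 = z"
    using c_shift[of 0] visit by simp
  show ?thesis
  proof (rule that)
    show "conjg c p \<in> CC A x0 p z"
      unfolding CC_def mp_def using c_A c_x0 by blast
    show "orb_len (conjg c p) x0 = l"
      using assms(4) by (simp add: orb_len_conjg[OF bij_c] c_x0)
    fix k
    have "(conjg c p ^^ k) x0 = inv c ((p ^^ k) z)"
      unfolding funpow_conjg[OF bij_c] by (simp add: conjg_def c_x0)
    then show "(conjg c p ^^ k) x0 = d ((p ^^ (k + J)) z)"
      using inv_f_eq[OF bij_is_inj[OF bij_c] c_shift[of k]] by simp
  qed
qed

lemma visiting_occurrence_conjugate: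
  assumes "p \<in> A" "d \<in> A" "0 < l" "(p ^^ l) z = z" "orb_len p z = l" "J < l"
    and visit: "d ((p ^^ J) z) = x0"
  obtains a where "a \<in> CC A x0 p z" "orb_len a x0 = l"
    "(\<Sum>j<l. if d ((p ^^ j) z) \<noteq> x0 then {#sect_perm b (d ((p ^^ j) z))#} else {#})
      = mset (map (\<lambda>k. sect_perm b ((a ^^ k) x0)) [1..<l])"
proof -
  obtain a where a_CC: "a \<in> CC A x0 p z" and orb_a: "orb_len a x0 = l"
    and a_pow: "\<And>k. (a ^^ k) x0 = d ((p ^^ (k + J)) z)"
    by (rule conjugate_shifting_orbit[OF assms(1,2,4,5,6) visit]) (rule that)
  define F where "F y = (if y \<noteq> x0 then {#sect_perm b y#} else {#})" for y
  have "(\<Sum>j<l. F (d ((p ^^ j) z))) = (\<Sum>k<l. F ((a ^^ k) x0))"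
    using sum_orbit_shift[OF assms(4), of "F \<circ> d" J] by (simp add: a_pow)
  also have "\<dots> = F ((a ^^ 0) x0) + (\<Sum>k\<in>{1..<l}. F ((a ^^ k) x0))"
    using \<open>0 < l\<close> by (simp add: lessThan_atLeast0 sum.atLeast_Suc_lessThan)
  also have "\<dots> = (\<Sum>k\<in>{1..<l}. {#sect_perm b ((a ^^ k) x0)#})"
    using funpow_neq_before_orb_len[of _ a x0] orb_a by (auto simp: F_def intro: sum.cong)
  also have "\<dots> = mset (map (\<lambda>k. sect_perm b ((a ^^ k) x0)) [1..<l])"
    by (rule mset_map_upt[symmetric])
  finally show ?thesis
    unfolding F_def by (rule that[OF a_CC orb_a])
qed

lemma a_letters_sect_pow_by_conjugates:
  assumes w: "is_word w"
    and l: "0 < l" "(word_root w ^^ l) z = z" "orb_len (word_root w) z = l"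
    and visits: "\<forall>q\<in>set (b_occurrences w). \<exists>J<l. snd q ((word_root w ^^ J) z) = x0"
  obtains conj where
    "\<And>q. q \<in> set (b_occurrences w) \<Longrightarrow> conj q \<in> CC A x0 (word_root w) z \<and> orb_len (conj q) x0 = l"
    "mset (a_letters (word_sect x0 (word_pow w l) z)) =
      mset (concat (map (\<lambda>q. map (\<lambda>k. sect_perm (fst q) ((conj q ^^ k) x0)) [1..<l]) (b_occurrences w)))"
proof -
  define p where "p = word_root w"
  define S where "S q = (\<Sum>j<l. if snd q ((p ^^ j) z) \<noteq> x0
    then {#sect_perm (fst q) (snd q ((p ^^ j) z))#} else {#})"
    for q :: "('x list \<Rightarrow> 'x list) \<times> ('x \<Rightarrow> 'x)"
  have "\<forall>q\<in>set (b_occurrences w). \<exists>a. (a \<in> CC A x0 p z \<and> orb_len a x0 = l) \<and>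
      S q = mset (map (\<lambda>k. sect_perm (fst q) ((a ^^ k) x0)) [1..<l])"
  proof
    fix q assume q: "q \<in> set (b_occurrences w)"
    then obtain J where J: "J < l" "snd q ((p ^^ J) z) = x0" using visits by (auto simp: p_def)
    have p_A: "p \<in> A" using word_root_in_A[OF w] by (simp add: p_def)
    have d_A: "snd q \<in> A" using b_occurrences_in[OF w q] by simp
    obtain a where "a \<in> CC A x0 p z" "orb_len a x0 = l"
      "S q = mset (map (\<lambda>k. sect_perm (fst q) ((a ^^ k) x0)) [1..<l])"
      unfolding S_def by (rule visiting_occurrence_conjugate[OF p_A d_A l[folded p_def] J])
    then show "\<exists>a. (a \<in> CC A x0 p z \<and> orb_len a x0 = l) \<and>
        S q = mset (map (\<lambda>k. sect_perm (fst q) ((a ^^ k) x0)) [1..<l])"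
      by blast
  qed
  then obtain conj where conj: "\<forall>q\<in>set (b_occurrences w). (conj q \<in> CC A x0 p z \<and> orb_len (conj q) x0 = l) \<and>
      S q = mset (map (\<lambda>k. sect_perm (fst q) ((conj q ^^ k) x0)) [1..<l])"
    by (rule bchoice[THEN exE])
  show ?thesis
  proof (rule that)
    show "conj q \<in> CC A x0 (word_root w) z \<and> orb_len (conj q) x0 = l" if "q \<in> set (b_occurrences w)" for q
      using conj that by (simp add: p_def)
    show "mset (a_letters (word_sect x0 (word_pow w l) z)) =
      mset (concat (map (\<lambda>q. map (\<lambda>k. sect_perm (fst q) ((conj q ^^ k) x0)) [1..<l]) (b_occurrences w)))"
      unfolding mset_a_letters_sect_pow mset_concat map_map p_def[symmetric]
      using conj by (intro arg_cong[where f = sum_list] map_cong refl) (simp add: S_def)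
  qed
qed

end

section \<open>Periodicity\<close>

lemma orbit_point_in_XX:
  assumes "a \<in> CC A x0 p z" "0 < k" "k < orb_len a x0"
  shows "(a ^^ k) x0 \<in> XX A x0 p z"
  using assms funpow_neq_before_orb_len[OF assms(2,3)] by (auto simp: XX_def orb_def)

lemma lam_eq_prod_right:
  "lam x0 b a = prod_right (map (\<lambda>k. sect_perm b ((a ^^ k) x0)) [1..<orb_len a x0])"
  by (simp add: lam_def sect_perm_def)

lemma Lam_funpow_mono: "P \<subseteq> Q \<Longrightarrow> (Lam x0 e b ^^ k) P \<subseteq> (Lam x0 e b ^^ k) Q"
proof (induction k)
  case (Suc k)
  then show ?case unfolding funpow.simps comp_def Lam_def by blast
qed simp

locale cs_periodicity = cs_data x0 A B
  for x0 :: 'x and A :: "('x \<Rightarrow> 'x) set" and B :: "('x list \<Rightarrow> 'x list) set" +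
  fixes e :: "'x \<Rightarrow> 'x \<Rightarrow> 'x"
  assumes e_mp: "\<forall>x. e x \<in> mp A x0 x"
    and stable: "stable x0 A B"
    and orbitwise_abelian: "strongly_orbitwise_abelian x0 A B"
    and A_periodic: "periodic A"
    and A_exponent_or_B_support: "finite_exponent A \<or> finite_support x0 B"
    and B_abelian: "abelian B"
    and B_periodic: "periodic B"
    and Lam_eventually_trivial: "\<forall>b\<in>B. eventually_trivial A (Lam x0 e b)"
begin

definition orbit_sects :: "('x \<Rightarrow> 'x) \<Rightarrow> 'x \<Rightarrow> ('x \<Rightarrow> 'x) set" where
  "orbit_sects p z = {sect_perm b y | b y. b \<in> B \<and> y \<in> XX A x0 p z}"

lemma sect_perm_in_orbit_sects:
  assumes "b \<in> B" "a \<in> CC A x0 p z" "k \<in> {1..<orb_len a x0}"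
  shows "sect_perm b ((a ^^ k) x0) \<in> orbit_sects p z"
proof -
  have "(a ^^ k) x0 \<in> XX A x0 p z" using assms(3) by (intro orbit_point_in_XX[OF assms(2)]) auto
  then show ?thesis using assms(1) unfolding orbit_sects_def by blast
qed

lemma pairwise_commute_orbit_sects:
  assumes "p \<in> A"
  shows "pairwise_commute (orbit_sects p z)"
proof -
  let ?G = "gen_grp {sect b [y] | b y. b \<in> B \<and> y \<in> XX A x0 p z}"
  have "abelian ?G"
    using orbitwise_abelian assms unfolding strongly_orbitwise_abelian_def by blast
  moreover have "rooted f \<in> ?G" if f: "f \<in> orbit_sects p z" for f
  proof -
    obtain b y where b_y: "f = sect_perm b y" "b \<in> B" "y \<in> XX A x0 p z"
      using f unfolding orbit_sects_def by blast
    then have "sect b [y] \<in> ?G" by (intro gen_gen) blast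
    moreover have "rooted f = sect b [y]"
      using b_y sect_eq_rooted[of b y] by (auto simp: XX_def)
    ultimately show ?thesis by simp
  qed
  ultimately have "rooted (f \<circ> g) = rooted (g \<circ> f)" if "f \<in> orbit_sects p z" "g \<in> orbit_sects p z" for f g
    using that by (simp add: abelian_def rooted_comp)
  then show ?thesis
    unfolding pairwise_commute_def by (blast dest: injD[OF inj_rooted])
qed

lemma lam_prod_right:
  assumes "p \<in> A" "a \<in> CC A x0 p z" "set bs \<subseteq> B"
  shows "lam x0 (prod_right bs) a = prod_right (map (\<lambda>b. lam x0 b a) bs)"
  using assms(3)
proof (induction bs)
  case Nil
  show ?case
    unfolding list.map(1) prod_right.simps(1) lam_eq_prod_right sect_perm_id by (rule prod_right_eq_id) auto
next
  case (Cons b bs)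
  let ?y = "\<lambda>k. (a ^^ k) x0"
  let ?ks = "[1..<orb_len a x0]"
  have y: "?y k \<in> XX A x0 p z" if "k \<in> set ?ks" for k
    using orbit_point_in_XX[OF assms(2)] that by simp
  moreover have "b \<in> B" "prod_right bs \<in> B"
    using Cons.prems perm_group_prod_right[OF B_group] by auto
  ultimately have "lam x0 (prod_right (b # bs)) a =
      prod_right (map (\<lambda>k. sect_perm (prod_right bs) (?y k) \<circ> sect_perm b (?y k)) ?ks)"
    unfolding lam_eq_prod_right
    by (intro arg_cong[where f = prod_right] map_cong) (auto simp: sect_perm_comp XX_def)
  also have "\<dots> = lam x0 (prod_right bs) a \<circ> lam x0 b a"
    unfolding lam_eq_prod_right using \<open>b \<in> B\<close> \<open>prod_right bs \<in> B\<close>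
    by (intro prod_right_map_comp[OF pairwise_commute_orbit_sects[OF assms(1), of z]])
      (simp add: sect_perm_in_orbit_sects[OF _ assms(2)])
  also have "\<dots> = prod_right (map (\<lambda>b. lam x0 b a) (b # bs))"
    using Cons by simp
  finally show ?case .
qed

lemma prod_right_b_letters_eq:
  assumes "is_word u" "mset (b_letters u) = mset (b_letters w)"
  shows "prod_right (b_letters u) = prod_right (b_letters w)"
  using B_abelian b_letters_in_B[OF assms(1)] assms(2)
  by (intro prod_right_mset_eq[of B]) (simp_all add: pairwise_commute_def abelian_def)

lemma root_sect_pow_eq_lamx:
  assumes w: "is_word w"
    and l: "0 < l" "(word_root w ^^ l) z = z" "orb_len (word_root w) z = l"
    and visits: "\<forall>q\<in>set (b_occurrences w). \<exists>J<l. snd q ((word_root w ^^ J) z) = x0"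
  shows "word_root (word_sect x0 (word_pow w l) z) = lamx x0 e (prod_right (b_letters w)) (word_root w) z"
proof -
  define p P where "p = word_root w" and "P = b_occurrences w"
  define a0 where "a0 = conjg (e z) p"
  have p_A: "p \<in> A" using word_root_in_A[OF w] by (simp add: p_def)
  have a0_CC: "a0 \<in> CC A x0 p z" using e_mp by (auto simp: a0_def CC_def)
  have fst_B: "fst q \<in> B" if "q \<in> set P" for q
    using b_occurrences_in[OF w] that by (simp add: P_def)
  obtain conj where conj: "\<And>q. q \<in> set P \<Longrightarrow> conj q \<in> CC A x0 p z \<and> orb_len (conj q) x0 = l"
    and mset_eq: "mset (a_letters (word_sect x0 (word_pow w l) z)) =
      mset (concat (map (\<lambda>q. map (\<lambda>k. sect_perm (fst q) ((conj q ^^ k) x0)) [1..<l]) P))"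
    by (rule a_letters_sect_pow_by_conjugates[OF w l visits, folded p_def P_def]) (rule that)
  define L where "L = (\<lambda>q. map (\<lambda>k. sect_perm (fst q) ((conj q ^^ k) x0)) [1..<l])"
  have mset_L: "mset (concat (map L P)) = mset (a_letters (word_sect x0 (word_pow w l) z))"
    using mset_eq by (simp add: L_def)
  \<comment> \<open>The rooted letters are sections at points of \<open>XX A x0 p z\<close>, so they commute.\<close>
  have sects: "set (concat (map L P)) \<subseteq> orbit_sects p z"
    using conj fst_B by (auto simp: L_def intro!: sect_perm_in_orbit_sects)
  have "word_root (word_sect x0 (word_pow w l) z) = prod_right (concat (map L P))"
    unfolding word_root_def
    by (rule prod_right_mset_eq[OF pairwise_commute_orbit_sects[OF p_A] sects mset_L, symmetric])
  also have "\<dots> = prod_right (map (\<lambda>q. lam x0 (fst q) a0) P)"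
    unfolding prod_right_concat map_map
  proof (intro arg_cong[where f = prod_right] map_cong refl)
    fix q assume q: "q \<in> set P"
    have "prod_right (L q) = lam x0 (fst q) (conj q)"
      using conj[OF q] by (simp add: L_def lam_eq_prod_right)
    also have "\<dots> = lam x0 (fst q) a0"
      using stable fst_B[OF q] p_A conj[OF q] a0_CC unfolding stable_def by blast
    finally show "(prod_right \<circ> L) q = lam x0 (fst q) a0" by simp
  qed
  also have "\<dots> = lam x0 (prod_right (map fst P)) a0"
  proof -
    have "set (map fst P) \<subseteq> B" using fst_B by auto
    then show ?thesis by (simp add: lam_prod_right[OF p_A a0_CC] comp_def)
  qed
  finally show ?thesis
    by (simp add: lamx_def a0_def p_def P_def b_letters_eq_map_fst)
qed

lemma sect_pow_has_finite_order:
  assumes w: "is_word w" and m: "0 < m" "word_root w ^^ m = id"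
    and fewer: "\<And>u. is_word u \<Longrightarrow> length (b_letters u) < length (b_letters w) \<Longrightarrow>
      has_finite_order (word_eval u)"
    and same: "\<And>u. word_root w \<noteq> id \<Longrightarrow> is_word u \<Longrightarrow> mset (b_letters u) = mset (b_letters w) \<Longrightarrow>
      word_root u \<in> Lam x0 e (prod_right (b_letters w)) {word_root w} \<Longrightarrow>
      has_finite_order (word_eval u)"
  shows "has_finite_order (word_eval (word_sect x0 (word_pow w (orb_len (word_root w) z)) z))"
proof -
  define p l where "p = word_root w" and "l = orb_len p z"
  define h where "h = word_sect x0 (word_pow w l) z"
  have "(p ^^ m) z = z" using m by (simp add: p_def)
  then have l: "0 < l" "(p ^^ l) z = z"
    using orb_len_pos funpow_orb_len m(1) by (simp_all add: l_def)
  have h_word: "is_word h" by (simp add: h_def w is_word_sect is_word_pow)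
  from sect_pow_b_letters_cases[OF w, of z]
  consider "length (b_letters h) < length (b_letters w)"
    | (all_visit) "\<forall>q\<in>set (b_occurrences w). \<exists>J<l. snd q ((p ^^ J) z) = x0"
      "mset (b_letters h) = mset (b_letters w)"
    unfolding h_def l_def p_def by blast
  then show ?thesis
  proof cases
    case 1
    with fewer h_word show ?thesis by (simp add: h_def l_def p_def)
  next
    case all_visit
    show ?thesis
    proof (cases "l = 1")
      case True
      then have "word_eval h \<in> B"
        using all_visit(1) word_eval_sect_in_B[OF w]
        by (simp add: h_def word_pow_def)
      then show ?thesis
        using B_periodic by (simp add: periodic_iff_has_finite_order h_def l_def p_def)
    next
      case False
      then have "p \<noteq> id"
        using funpow_neq_before_orb_len[of 1 p z] l(1) by (auto simp: l_def)
      moreover have "word_root h = lamx x0 e (prod_right (b_letters w)) p z"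
        unfolding h_def p_def
        by (rule root_sect_pow_eq_lamx[OF w l[unfolded p_def] _ all_visit(1)[unfolded p_def]])
          (simp add: l_def p_def)
      then have "word_root h \<in> Lam x0 e (prod_right (b_letters w)) {p}"
        unfolding Lam_def by blast
      ultimately show ?thesis
        using same h_word all_visit(2) by (simp add: h_def l_def p_def)
    qed
  qed
qed

lemma sect_pow_uniform_exponent:
  assumes w: "is_word w" and m: "0 < m" "word_root w ^^ m = id"
  shows "\<exists>E>0. \<exists>F. finite F \<and>
    (\<forall>z. z \<notin> F \<longrightarrow> word_eval (word_sect x0 (word_pow w (orb_len (word_root w) z)) z) ^^ E = id)"
proof -
  define h where "h z = word_sect x0 (word_pow w (orb_len (word_root w) z)) z" for z
  obtain F0 where "finite F0" and "\<forall>z. z \<notin> F0 \<longrightarrow> b_letters (h z) = []"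
    using sect_pow_b_letters_Nil_cofinite[OF w m] unfolding h_def by blast
  then have rooted: "word_eval (h z) = rooted (word_root (h z))" if "z \<notin> F0" for z
    using that by (simp add: word_eval_eq_rooted)
  show ?thesis
    using A_exponent_or_B_support
  proof
    assume "finite_exponent A"
    then obtain E where "0 < E" "\<forall>a\<in>A. a ^^ E = id" unfolding finite_exponent_def by blast
    moreover have "word_root (h z) \<in> A" for z
      by (simp add: h_def w is_word_sect is_word_pow word_root_in_A)
    ultimately have "\<forall>z. z \<notin> F0 \<longrightarrow> word_eval (h z) ^^ E = id"
      using rooted by (simp add: rooted_funpow)
    then show ?thesis
      using \<open>0 < E\<close> \<open>finite F0\<close> unfolding h_def by blast
  next
    assume "finite_support x0 B"
    then obtain F1 where "finite F1" and "\<forall>z. z \<notin> F1 \<longrightarrow> set (a_letters (h z)) \<subseteq> {id}"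
      using sect_pow_a_letters_id_cofinite[OF w m] unfolding h_def by blast
    then have "\<forall>z. z \<notin> F0 \<union> F1 \<longrightarrow> word_eval (h z) ^^ 1 = id"
      using rooted by (simp add: word_root_def prod_right_eq_id)
    then show ?thesis
      using \<open>finite F0\<close> \<open>finite F1\<close> unfolding h_def by (intro exI[of _ 1]) blast
  qed
qed

text \<open>The two hypotheses are the induction hypotheses of \<open>word_has_finite_order\<close>. The second one is
  only granted for a nontrivial root permutation, since \<open>\<Lambda>\<^sub>b{id} = {id}\<close> makes no progress.\<close>

lemma word_has_finite_order_step:
  assumes w: "is_word w"
    and fewer: "\<And>u. is_word u \<Longrightarrow> length (b_letters u) < length (b_letters w) \<Longrightarrow>
      has_finite_order (word_eval u)"
    and same: "\<And>u. word_root w \<noteq> id \<Longrightarrow> is_word u \<Longrightarrow> mset (b_letters u) = mset (b_letters w) \<Longrightarrow>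
      word_root u \<in> Lam x0 e (prod_right (b_letters w)) {word_root w} \<Longrightarrow>
      has_finite_order (word_eval u)"
  shows "has_finite_order (word_eval w)"
proof -
  define p where "p = word_root w"
  obtain m where m: "0 < m" "p ^^ m = id"
    using A_periodic word_root_in_A[OF w] unfolding periodic_def p_def by blast
  define h where "h z = word_sect x0 (word_pow w (orb_len p z)) z" for z
  obtain N where N: "0 < N" "\<And>z. word_eval (h z) ^^ N = id"
  proof -
    have "has_finite_order (word_eval (h z))" for z
      unfolding h_def p_def by (rule sect_pow_has_finite_order[OF w m[unfolded p_def] fewer same])
    moreover obtain E F where "0 < E" "finite F" "\<And>z. z \<notin> F \<Longrightarrow> word_eval (h z) ^^ E = id"
      using sect_pow_uniform_exponent[OF w m[unfolded p_def]] unfolding h_def p_def by blast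
    ultimately have "\<exists>N>0. \<forall>z. word_eval (h z) ^^ N = id"
      by (rule common_exponent_cofinite)
    then show ?thesis using that by blast
  qed
  have "word_eval (word_pow w m) ^^ N = id"
  proof (rule word_eval_funpow_eq_id)
    show "is_word (word_pow w m)" by (rule is_word_pow[OF w])
    show "word_root (word_pow w m) = id" using m by (simp add: word_root_pow p_def)
    fix z
    have pmz: "(p ^^ m) z = z" using m by simp
    have "orb_len p z dvd m" by (rule orb_len_dvd[OF pmz m(1)])
    then obtain q where q: "m = orb_len p z * q" by (rule dvdE)
    have "word_sect x0 (word_pow w m) z = word_pow (h z) q"
      unfolding q h_def p_def by (rule word_sect_pow_mult) (use funpow_orb_len[OF pmz m(1)] in \<open>simp add: p_def\<close>)
    then have "word_eval (word_sect x0 (word_pow w m) z) ^^ N = (word_eval (h z) ^^ N) ^^ q"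
      by (simp add: word_eval_pow funpow_mult mult.commute)
    then show "word_eval (word_sect x0 (word_pow w m) z) ^^ N = id"
      by (simp add: N(2))
  qed
  then have "word_eval w ^^ (m * N) = id" by (simp add: word_eval_pow funpow_mult)
  then show ?thesis unfolding has_finite_order_def using m(1) N(1) by (intro exI[of _ "m * N"]) simp
qed

lemma word_has_finite_order_same_letters:
  assumes fewer: "\<And>v. is_word v \<Longrightarrow> length (b_letters v) < length (b_letters w) \<Longrightarrow>
      has_finite_order (word_eval v)"
    and u: "is_word u" "mset (b_letters u) = mset (b_letters w)"
    and trivial: "(Lam x0 e (prod_right (b_letters w)) ^^ k) {word_root u} \<subseteq> {id}"
  shows "has_finite_order (word_eval u)"
proof -
  define b where "b = prod_right (b_letters w)"
  have fewer_u: "has_finite_order (word_eval v)"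
    if "is_word v" "mset (b_letters u) = mset (b_letters w)" "length (b_letters v) < length (b_letters u)"
    for u v
  proof -
    have "length (b_letters v) < length (b_letters w)"
      using that(3) arg_cong[OF that(2), of size] by simp
    then show ?thesis using fewer that(1) by blast
  qed
  show ?thesis
    using u trivial[folded b_def]
  proof (induction k arbitrary: u)
    case 0
    have "word_root u = id" using 0(3) unfolding funpow.simps(1) id_apply by blast
    show ?case
    proof (rule word_has_finite_order_step[OF 0(1) fewer_u[OF _ 0(2)]])
      fix v assume "word_root u \<noteq> id"
      then show "has_finite_order (word_eval v)" using \<open>word_root u = id\<close> by contradiction
    qed
  next
    case (Suc k)
    have b_u: "prod_right (b_letters u) = b"
      using prod_right_b_letters_eq[OF Suc.prems(1,2)] by (simp add: b_def)
    show ?case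
    proof (rule word_has_finite_order_step[OF Suc.prems(1) fewer_u[OF _ Suc.prems(2)]])
      fix v assume v: "is_word v" "mset (b_letters v) = mset (b_letters u)"
        "word_root v \<in> Lam x0 e (prod_right (b_letters u)) {word_root u}"
      have "(Lam x0 e b ^^ k) {word_root v} \<subseteq> (Lam x0 e b ^^ k) (Lam x0 e b {word_root u})"
        using v(3) b_u by (intro Lam_funpow_mono) simp
      also have "\<dots> = (Lam x0 e b ^^ Suc k) {word_root u}"
        by (simp only: funpow_Suc_right comp_apply)
      also have "\<dots> \<subseteq> {id}" by (rule Suc.prems(3))
      finally have "(Lam x0 e b ^^ k) {word_root v} \<subseteq> {id}" .
      moreover have "mset (b_letters v) = mset (b_letters w)" using v(2) Suc.prems(2) by simp
      ultimately show "has_finite_order (word_eval v)" using Suc.IH[OF v(1)] by blast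
    qed
  qed
qed

lemma word_has_finite_order: "is_word w \<Longrightarrow> has_finite_order (word_eval w)"
proof (induction "length (b_letters w)" arbitrary: w rule: less_induct)
  case less
  have "prod_right (b_letters w) \<in> B"
    by (rule perm_group_prod_right[OF B_group b_letters_in_B[OF less.prems]])
  then obtain n where "\<forall>k>n. (Lam x0 e (prod_right (b_letters w)) ^^ k) {word_root w} \<subseteq> {id}"
    using Lam_eventually_trivial word_root_in_A[OF less.prems] unfolding eventually_trivial_def by blast
  then show ?case
    using word_has_finite_order_same_letters[OF _ less.prems refl, of "Suc n"] less.hyps by blast
qed

lemma periodic_CS_group: "periodic (CS_group A B)"
  unfolding periodic_iff_has_finite_order using CS_group_word word_has_finite_order by blast

end

theorem theoremA:
  fixes x0 :: 'x
    and A :: "('x \<Rightarrow> 'x) set"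
    and B :: "('x list \<Rightarrow> 'x list) set"
    and e :: "'x \<Rightarrow> ('x \<Rightarrow> 'x)"
  assumes CS: "CS_data x0 A B"
    and e_mp: "\<forall>x. e x \<in> mp A x0 x"
    and e_0: "e x0 = id"
    and stab: "stable x0 A B"
    and soa: "strongly_orbitwise_abelian x0 A B"
    and A_per: "periodic A"
    and fin: "finite_exponent A \<or> finite_support x0 B"
    and B_ab: "abelian B"
    and B_per: "periodic B"
    and ev: "\<forall>b\<in>B. eventually_trivial A (Lam x0 e b)"
  shows "periodic (CS_group A B)"
proof -
  \<comment> \<open>\<open>e_0\<close> is a normalisation only: by stability \<open>\<lambda>\<^sub>b(a, x)\<close> does not depend on the choice of \<open>e x\<close>.\<close>
  interpret cs_periodicity x0 A B e
    by unfold_locales (fact CS e_mp stab soa A_per fin B_ab B_per ev)+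
  show ?thesis by (rule periodic_CS_group)
qed

end
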